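(* Let $\mathcal{X}$ be a discrete set and let $\mathcal{A}$ be an $\varepsilon$-differentially private randomized algorithm that, given a dataset $S\in\mathcal{X}^n$, outputs a function from $\mathcal{X}$ to $[0,1]$. Let $\mathcal{P}$ be any distribution over $\mathcal{X}$, let $\mathbf{S}$ be a random variable distributed according to $\mathcal{P}^n$, and let $\boldsymbol{\phi}=\mathcal{A}(\mathbf{S})$. Then for any $\beta>0$, $\tau>0$ and $n\ge 12\ln(4/\beta)/\tau^2$, if $\varepsilon\le\tau/2$ then $$\Pr\left[\,\left|\mathcal{P}[\boldsymbol{\phi}]-\mathcal{E}_{\mathbf{S}}[\boldsymbol{\phi}]\right|>\tau\,\right]\le\beta,$$ where the probability is over the randomness of $\mathcal{A}$ and of $\mathbf{S}$.
   Context: For a function $\psi:\mathcal{X}\to[0,1]$, $\mathcal{P}[\psi]=\mathbb{E}_{x\sim\mathcal{P}}[\psi(x)]$, and for a dataset $S=(x_1,\dots,x_n)$, $\mathcal{E}_S[\psi]=\frac1n\sum_{i=1}^n\psi(x_i)$ is the empirical average. Two datasets in $\mathcal{X}^n$ are adjacent if they differ in a single element. A randomized algorithm $\mathcal{A}$ with domain $\mathcal{X}^n$ is $(\varepsilon,\delta)$-differentially private if for every set $\mathcal{S}$ of outputs and every pair of adjacent datasets $x,y$, $\Pr[\mathcal{A}(x)\in\mathcal{S}]\le e^{\varepsilon}\Pr[\mathcal{A}(y)\in\mathcal{S}]+\delta$ (probability over the coins of $\mathcal{A}$); $\varepsilon$-differentially private means $(\varepsilon,0)$-differentially private. *)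

theory Defs
  imports "HOL-Probability.Probability"
begin

definition adjacent :: "'a list \<Rightarrow> 'a list \<Rightarrow> bool" where
  "adjacent S T \<longleftrightarrow> length S = length T \<and> card {i. i < length S \<and> S ! i \<noteq> T ! i} = 1"

definition out_space :: "('a \<Rightarrow> real) measure" where
  "out_space = PiM UNIV (\<lambda>_. borel)"

text \<open>A randomized algorithm on X^n is given by its output distribution on each dataset.\<close>
definition diff_private :: "real \<Rightarrow> real \<Rightarrow> nat \<Rightarrow> ('a list \<Rightarrow> 'b measure) \<Rightarrow> bool" where
  "diff_private \<epsilon> \<delta> n A \<longleftrightarrow>
     (\<forall>x y. length x = n \<longrightarrow> length y = n \<longrightarrow> adjacent x y \<longrightarrow>
        (\<forall>E \<in> sets (A x). measure (A x) E \<le> exp \<epsilon> * measure (A y) E + \<delta>))"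

definition pop_avg :: "'a pmf \<Rightarrow> ('a \<Rightarrow> real) \<Rightarrow> real" where
  "pop_avg P \<psi> = measure_pmf.expectation P \<psi>"

definition emp_avg :: "'a list \<Rightarrow> ('a \<Rightarrow> real) \<Rightarrow> real" where
  "emp_avg S \<psi> = (\<Sum>i<length S. \<psi> (S ! i)) / real (length S)"

end

theory Submission
  imports Defs
begin

(* Write p = P[phi]. The two-sided event is covered by the upper tails of the [0,1]-valued
   queries phi and 1 - phi. On an upper tail, Markov's inequality with lambda = 2 tau and the
   convexity bound exp (lambda v) <= 1 + c v on [0,1], where c = e^lambda - 1, dominate the
   indicator by exp (-lambda n (tau + p)) * prod_i (1 + c phi(x_i)). A hybrid argument replaces
   these factors one at a time by 1 + c e^eps p: resampling x_i by a fresh draw from P turns S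
   into an adjacent dataset, which costs a factor e^eps by differential privacy, and by
   exchangeability turns phi(x_i) into phi at an independent sample, whose mean is p. Finally
   exp (-lambda p) (1 + c e^eps p) <= exp (23 tau^2 / 12) when eps <= tau/2, so each tail has
   probability at most exp (-n tau^2 / 12) <= beta/4. *)

section \<open>Elementary inequalities\<close>

lemma exp_le_cubic_Taylor:
  fixes u :: real
  assumes "0 \<le> u" "u \<le> 1/2"
  shows "exp u \<le> 1 + u + u^2/2 + u^3/3"
proof -
  obtain t where t: "\<bar>t\<bar> \<le> \<bar>u\<bar>" "exp u = (\<Sum>m<3. u ^ m / fact m) + exp t / fact 3 * u ^ 3"
    using Maclaurin_exp_le[of u 3] by blast
  have "exp t \<le> exp (1/2)" using t(1) assms by simp
  also have "\<dots> \<le> 1 + 1/2 + (1/2)^2" by (rule exp_bound) auto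
  finally have "exp t \<le> 2" by (simp add: power2_eq_square)
  then have "exp t / fact 3 * u ^ 3 \<le> 2 / 6 * u^3"
    using assms by (intro mult_right_mono) (auto simp: fact_numeral)
  then show ?thesis using t(2) by (simp add: eval_nat_numeral fact_numeral)
qed

lemma cubic_Taylor_pow5_le:
  fixes t :: real
  assumes t: "0 \<le> t" "t \<le> 1"
  shows "(1 + t/2 + t^2/8 + t^3/24)^5 \<le> 1 + t/2 + t^2/8 + 2*t + 3*t^2 + 7*t^3"
proof -
  define v where "v = t/2 + t^2/8 + t^3/24"
  have t2: "t^2 \<le> t" "t^3 \<le> t^2" using t by (auto simp: eval_nat_numeral mult_left_le_one_le)
  have v0: "0 \<le> v" using t unfolding v_def by simp
  have v1: "v \<le> 2*t/3" using t t2 unfolding v_def by simp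
  have "v^3 * v \<le> v^3 * (2/3)" using v0 v1 t by (intro mult_left_mono) auto
  moreover have "v^3 * v^2 \<le> v^3 * (4/9)"
  proof -
    have "v^2 \<le> (2/3)^2" using v0 v1 t by (intro power_mono) auto
    then show ?thesis using v0 by (intro mult_left_mono) (auto simp: power2_eq_square)
  qed
  moreover have "v^3 \<le> (2*t/3)^3" using v0 v1 by (intro power_mono) auto
  ultimately have high: "10 * v^3 + 5 * v^4 + v^5 \<le> 992/243 * t^3"
    by (simp add: eval_nat_numeral algebra_simps power_divide)
  have "v^2 - t^2/4 = (v - t/2) * (v + t/2)" by (simp add: algebra_simps power2_eq_square)
  also have "\<dots> \<le> (t^2/6) * (7*t/6)"
    using t2 v1 v0 t by (intro mult_mono) (auto simp: v_def)
  finally have quad: "10 * v^2 \<le> 5*t^2/2 + 35/18 * t^3"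
    by (simp add: eval_nat_numeral algebra_simps)
  have "(1 + t/2 + t^2/8 + t^3/24)^5 = (1 + v)^5" unfolding v_def by (simp add: add.assoc)
  also have "\<dots> = 1 + 5 * v + 10 * v^2 + 10 * v^3 + 5 * v^4 + v^5"
    by (simp add: eval_nat_numeral algebra_simps)
  finally have "(1 + t/2 + t^2/8 + t^3/24)^5 = 1 + 5 * v + 10 * v^2 + 10 * v^3 + 5 * v^4 + v^5" .
  moreover have "5 * v = 5*t/2 + 5*t^2/8 + 5*t^3/24" unfolding v_def by simp
  moreover have "0 \<le> t^3" using t by simp
  ultimately show ?thesis using high quad by linarith
qed

lemma exp_5half_minus_exp_half_le:
  fixes t :: real
  assumes t: "0 \<le> t" "t \<le> 1"
  shows "exp (5*t/2) - exp (t/2) \<le> 2*t + 3*t^2 + 7*t^3"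
proof -
  have upper: "exp (t/2) \<le> 1 + t/2 + t^2/8 + t^3/24"
    using exp_le_cubic_Taylor[of "t/2"] t by (simp add: power_divide)
  have lower: "1 + t/2 + t^2/8 \<le> exp (t/2)"
    using exp_lower_Taylor_quadratic[of "t/2"] t by (simp add: power_divide)
  have "exp (5*t/2) = exp (t/2) ^ 5" by (subst exp_of_nat_mult[symmetric]) simp
  also have "\<dots> \<le> (1 + t/2 + t^2/8 + t^3/24)^5" using upper by (intro power_mono) auto
  finally show ?thesis using lower cubic_Taylor_pow5_le[OF t] by linarith
qed

lemma quadratic_nonneg_of_unit_interval:
  fixes t p :: real
  assumes t: "0 \<le> t" "t \<le> 1"
  shows "0 \<le> 23/12 - (3 + 19*t/6) * p + (2 + 23*t^2/6) * p^2"
proof -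
  define a where "a = 2 + 23*t^2/6"
  define b where "b = 3 + 19*t/6"
  have a: "a > 0" unfolding a_def by (simp add: add_pos_nonneg)
  have "4 * a * (23/12) - b^2 = 697/36 * (t - 342/697)^2 + (19/3 - 697/36 * (342/697)^2)"
    unfolding a_def b_def by (simp add: algebra_simps power2_eq_square)
  moreover have "0 < 19/3 - 697/36 * (342/697::real)^2" by (simp add: power2_eq_square)
  ultimately have discr: "b^2 < 4 * a * (23/12)" using zero_le_power2[of "t - 342/697"] by linarith
  have "4 * a * (23/12 - b * p + a * p^2) = (2*a*p - b)^2 + (4 * a * (23/12) - b^2)"
    by (simp add: algebra_simps power2_eq_square)
  with discr have "0 \<le> 4 * a * (23/12 - b * p + a * p^2)" by simp
  with a show ?thesis unfolding a_def b_def by (simp add: zero_le_mult_iff)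
qed

lemma exp_neg_mult_affine_le:
  fixes t p e :: real
  assumes t: "0 \<le> t" "t \<le> 1" and p: "0 \<le> p" "p \<le> 1" and e: "0 \<le> e" "e \<le> t/2"
  shows "exp (- (2*t*p)) * (1 + (exp (2*t) - 1) * exp e * p) \<le> exp (23/12 * t^2)"
proof -
  define a where "a = (exp (2*t) - 1) * exp e"
  have "a \<le> (exp (2*t) - 1) * exp (t/2)" unfolding a_def using e t by (intro mult_left_mono) auto
  also have "\<dots> = exp (5*t/2) - exp (t/2)" by (simp add: algebra_simps flip: exp_add)
  also have "\<dots> \<le> 2*t + 3*t^2 + 7*t^3" by (rule exp_5half_minus_exp_half_le[OF t])
  finally have a: "a \<le> 2*t + 3*t^2 + 7*t^3" .
  have "1 + a * p \<le> 1 + (2*t + 3*t^2 + 7*t^3) * p"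
    using a p by (intro add_left_mono mult_right_mono) auto
  also have "\<dots> = (1 + 23/12 * t^2) * (1 + 2*t*p + 2*t^2*p^2)
      - t^2 * (23/12 - (3 + 19*t/6) * p + (2 + 23*t^2/6) * p^2)"
    by (simp add: algebra_simps power2_eq_square eval_nat_numeral)
  also have "\<dots> \<le> (1 + 23/12 * t^2) * (1 + 2*t*p + 2*t^2*p^2)"
    using quadratic_nonneg_of_unit_interval[OF t, of p] by simp
  also have "\<dots> \<le> exp (23/12 * t^2) * exp (2*t*p)"
  proof (intro mult_mono)
    show "1 + 23/12 * t^2 \<le> exp (23/12 * t^2)" by (rule exp_ge_add_one_self)
    show "1 + 2*t*p + 2*t^2*p^2 \<le> exp (2*t*p)"
      using exp_lower_Taylor_quadratic[of "2*t*p"] t p by (simp add: power_mult_distrib mult_ac)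
  qed (use t p in auto)
  finally have "exp (- (2*t*p)) * (1 + a * p) \<le> exp (- (2*t*p)) * (exp (23/12 * t^2) * exp (2*t*p))"
    by (intro mult_left_mono) auto
  also have "\<dots> = exp (23/12 * t^2)" by (simp flip: exp_add)
  finally show ?thesis unfolding a_def by (simp add: mult.assoc)
qed

lemma exp_mult_le_affine:
  fixes l v :: real
  assumes "0 \<le> l" "0 \<le> v" "v \<le> 1"
  shows "exp (l * v) \<le> 1 + (exp l - 1) * v"
  using convex_onD[OF convex_on_exp[OF assms(1)], of v 0 1] assms(2,3)
  by (simp add: algebra_simps)

lemma exp_mult_sum_le_prod_affine:
  fixes l :: real and v :: "'i \<Rightarrow> real"
  assumes "0 \<le> l" "\<And>i. i \<in> I \<Longrightarrow> 0 \<le> v i \<and> v i \<le> 1"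
  shows "exp (l * sum v I) \<le> (\<Prod>i\<in>I. 1 + (exp l - 1) * v i)"
proof -
  have "exp (l * sum v I) = (\<Prod>i\<in>I. exp (l * v i))"
    by (cases "finite I") (simp_all add: sum_distrib_left exp_sum)
  also have "\<dots> \<le> (\<Prod>i\<in>I. 1 + (exp l - 1) * v i)"
    using assms by (intro prod_mono) (auto intro: exp_mult_le_affine)
  finally show ?thesis .
qed

lemma exp_le_of_sample_size:
  fixes \<beta> \<tau> :: real
  assumes "0 < \<beta>" "0 < \<tau>" "12 * ln (4 / \<beta>) / \<tau>^2 \<le> real n"
  shows "4 * exp (- (real n * \<tau>^2 / 12)) \<le> \<beta>"
proof -
  have "ln (4 / \<beta>) \<le> real n * \<tau>^2 / 12"
    using assms(2,3) by (simp add: divide_le_eq mult.commute)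
  then have "exp (- (real n * \<tau>^2 / 12)) \<le> exp (- ln (4 / \<beta>))" by simp
  also have "\<dots> = \<beta> / 4" using assms(1) by (simp add: exp_minus)
  finally show ?thesis by simp
qed

section \<open>Population and empirical averages\<close>

lemma
  assumes "\<And>x. 0 \<le> \<psi> x \<and> \<psi> x \<le> 1"
  shows nn_integral_eq_pop_avg: "(\<integral>\<^sup>+x. ennreal (\<psi> x) \<partial>measure_pmf P) = ennreal (pop_avg P \<psi>)"
    and pop_avg_nonneg: "0 \<le> pop_avg P \<psi>"
    and pop_avg_le_1: "pop_avg P \<psi> \<le> 1"
proof -
  have int: "integrable (measure_pmf P) \<psi>"
    by (rule measure_pmf.integrable_const_bound[where B=1]) (use assms in auto)
  show "(\<integral>\<^sup>+x. ennreal (\<psi> x) \<partial>measure_pmf P) = ennreal (pop_avg P \<psi>)"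
    unfolding pop_avg_def by (rule nn_integral_eq_integral[OF int]) (use assms in auto)
  show "0 \<le> pop_avg P \<psi>" unfolding pop_avg_def using assms by (intro integral_nonneg_AE) auto
  have "pop_avg P \<psi> \<le> measure_pmf.expectation P (\<lambda>_. 1)"
    unfolding pop_avg_def using assms int by (intro integral_mono) auto
  then show "pop_avg P \<psi> \<le> 1" by simp
qed

lemma borel_measurable_pop_avg:
  fixes V :: "'b \<Rightarrow> 'a::countable \<Rightarrow> real"
  assumes V: "\<And>x. (\<lambda>\<phi>. V \<phi> x) \<in> borel_measurable M"
    and V_01: "\<And>\<phi> x. 0 \<le> V \<phi> x \<and> V \<phi> x \<le> 1"
  shows "(\<lambda>\<phi>. pop_avg P (V \<phi>)) \<in> borel_measurable M"
proof -
  have eq: "pop_avg P (V \<phi>)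
      = enn2real (\<integral>\<^sup>+x. ennreal (pmf P x) * ennreal (V \<phi> x) \<partial>count_space UNIV)" for \<phi>
    using nn_integral_eq_pop_avg[of "V \<phi>" P] pop_avg_nonneg[of "V \<phi>" P] V_01
    by (simp add: nn_integral_measure_pmf)
  have "(\<lambda>(x, \<phi>). ennreal (pmf P x) * ennreal (V \<phi> x)) \<in> borel_measurable (count_space UNIV \<Otimes>\<^sub>M M)"
    by (rule measurable_pair_measure_countable1) (auto intro!: measurable_compose[OF V])
  then have "(\<lambda>(\<phi>, x). ennreal (pmf P x) * ennreal (V \<phi> x)) \<in> borel_measurable (M \<Otimes>\<^sub>M count_space UNIV)"
    by (subst measurable_pair_swap_iff) (simp add: split_beta)
  then have "(\<lambda>\<phi>. \<integral>\<^sup>+x. ennreal (pmf P x) * ennreal (V \<phi> x) \<partial>count_space UNIV) \<in> borel_measurable M"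
    by (intro sigma_finite_measure.borel_measurable_nn_integral sigma_finite_measure_count_space_countable) auto
  then show ?thesis unfolding eq by measurable
qed

lemma
  assumes "S \<noteq> []" "\<And>x. 0 \<le> \<psi> x \<and> \<psi> x \<le> 1"
  shows emp_avg_nonneg: "0 \<le> emp_avg S \<psi>"
    and emp_avg_le_1: "emp_avg S \<psi> \<le> 1"
proof -
  show "0 \<le> emp_avg S \<psi>"
    unfolding emp_avg_def using assms(2) by (intro divide_nonneg_nonneg sum_nonneg) auto
  have "(\<Sum>i<length S. \<psi> (S!i)) \<le> (\<Sum>i<length S. 1)" using assms(2) by (intro sum_mono) auto
  then show "emp_avg S \<psi> \<le> 1" using assms(1) unfolding emp_avg_def by (simp add: divide_le_eq)
qed

lemma emp_avg_one_minus: "S \<noteq> [] \<Longrightarrow> emp_avg S (\<lambda>x. 1 - \<psi> x) = 1 - emp_avg S \<psi>"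
  unfolding emp_avg_def by (simp add: sum_subtractf diff_divide_distrib)

lemma pop_avg_one_minus:
  assumes "\<And>x. 0 \<le> \<psi> x \<and> \<psi> x \<le> 1"
  shows "pop_avg P (\<lambda>x. 1 - \<psi> x) = 1 - pop_avg P \<psi>"
proof -
  have "integrable (measure_pmf P) \<psi>"
    by (rule measure_pmf.integrable_const_bound[where B=1]) (use assms in auto)
  then show ?thesis unfolding pop_avg_def by simp
qed

lemma abs_pop_avg_minus_emp_avg_le_1:
  assumes "S \<noteq> []" "\<And>x. 0 \<le> \<psi> x \<and> \<psi> x \<le> 1"
  shows "\<bar>pop_avg P \<psi> - emp_avg S \<psi>\<bar> \<le> 1"
proof -
  have "0 \<le> pop_avg P \<psi>" "pop_avg P \<psi> \<le> 1" "0 \<le> emp_avg S \<psi>" "emp_avg S \<psi> \<le> 1"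
    using assms by (simp_all add: pop_avg_nonneg pop_avg_le_1 emp_avg_nonneg emp_avg_le_1)
  then show ?thesis by linarith
qed

(* Clipping to [0,1] makes the queries phi and 1 - phi bounded for every output phi, while
   changing nothing on outputs that take values in [0,1], which is almost every output. *)
definition clip01 :: "real \<Rightarrow> real" where
  "clip01 t = min 1 (max 0 t)"

lemma clip01_bounds: "0 \<le> clip01 t \<and> clip01 t \<le> 1"
  unfolding clip01_def by auto

lemma clip01_id: "0 \<le> t \<Longrightarrow> t \<le> 1 \<Longrightarrow> clip01 t = t"
  unfolding clip01_def by auto

lemma borel_measurable_clip01_apply [measurable]:
  "(\<lambda>\<phi>. clip01 (\<phi> x)) \<in> borel_measurable out_space"
  unfolding clip01_def out_space_def by measurable

section \<open>Integration over probability mass functions\<close>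

lemma nn_integral_pmf_swap_measure:
  fixes P :: "'b::countable pmf"
  assumes g: "\<And>w. g w \<in> borel_measurable M"
  shows "(\<integral>\<^sup>+w. \<integral>\<^sup>+\<phi>. g w \<phi> \<partial>M \<partial>measure_pmf P) = (\<integral>\<^sup>+\<phi>. \<integral>\<^sup>+w. g w \<phi> \<partial>measure_pmf P \<partial>M)"
proof -
  have "(\<integral>\<^sup>+w. \<integral>\<^sup>+\<phi>. g w \<phi> \<partial>M \<partial>measure_pmf P)
      = (\<integral>\<^sup>+w. \<integral>\<^sup>+\<phi>. ennreal (pmf P w) * g w \<phi> \<partial>M \<partial>count_space UNIV)"
    by (simp add: nn_integral_measure_pmf nn_integral_cmult g)
  also have "\<dots> = (\<integral>\<^sup>+\<phi>. \<integral>\<^sup>+w. ennreal (pmf P w) * g w \<phi> \<partial>count_space UNIV \<partial>M)"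
    by (rule nn_integral_count_space_nn_integral[symmetric]) (use g in auto)
  also have "\<dots> = (\<integral>\<^sup>+\<phi>. \<integral>\<^sup>+w. g w \<phi> \<partial>measure_pmf P \<partial>M)"
    by (simp add: nn_integral_measure_pmf)
  finally show ?thesis .
qed

lemma nn_integral_pmf_commute:
  fixes p :: "'a::countable pmf"
  shows "(\<integral>\<^sup>+x. \<integral>\<^sup>+y. f x y \<partial>measure_pmf q \<partial>measure_pmf p) = (\<integral>\<^sup>+y. \<integral>\<^sup>+x. f x y \<partial>measure_pmf p \<partial>measure_pmf q)"
  by (rule nn_integral_pmf_swap_measure) simp

lemma replicate_pmf_split_nth:
  assumes "j < n"
  shows "replicate_pmf n P =
    do {xs \<leftarrow> replicate_pmf j P; x \<leftarrow> P; ys \<leftarrow> replicate_pmf (n - Suc j) P; return_pmf (xs @ x # ys)}"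
proof -
  have "replicate_pmf n P = replicate_pmf (j + Suc (n - Suc j)) P" using assms by simp
  then show ?thesis
    by (simp only: replicate_pmf_distrib replicate_pmf.simps(2) bind_assoc_pmf bind_return_pmf)
qed

lemma nn_integral_replicate_pmf_resample:
  fixes F :: "'a::countable list \<Rightarrow> 'a \<Rightarrow> ennreal"
  assumes "j < n"
  shows "(\<integral>\<^sup>+S. \<integral>\<^sup>+w. F (S[j:=w]) (S!j) \<partial>measure_pmf P \<partial>measure_pmf (replicate_pmf n P))
       = (\<integral>\<^sup>+S. \<integral>\<^sup>+w. F S w \<partial>measure_pmf P \<partial>measure_pmf (replicate_pmf n P))"
proof -
  let ?R = "replicate_pmf j P" and ?Q = "replicate_pmf (n - Suc j) P"
  have "(\<integral>\<^sup>+S. \<integral>\<^sup>+w. F (S[j:=w]) (S!j) \<partial>measure_pmf P \<partial>measure_pmf (replicate_pmf n P))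
      = (\<integral>\<^sup>+xs. \<integral>\<^sup>+x. \<integral>\<^sup>+ys. \<integral>\<^sup>+w. F ((xs @ x # ys)[j:=w]) ((xs @ x # ys)!j) \<partial>P \<partial>?Q \<partial>P \<partial>?R)"
    by (subst replicate_pmf_split_nth[OF assms]) simp
  also have "\<dots> = (\<integral>\<^sup>+xs. \<integral>\<^sup>+x. \<integral>\<^sup>+ys. \<integral>\<^sup>+w. F (xs @ w # ys) x \<partial>P \<partial>?Q \<partial>P \<partial>?R)"
    by (intro nn_integral_cong_AE)
      (auto simp: AE_measure_pmf_iff set_replicate_pmf list_update_append nth_append)
  also have "\<dots> = (\<integral>\<^sup>+xs. \<integral>\<^sup>+x. \<integral>\<^sup>+w. \<integral>\<^sup>+ys. F (xs @ w # ys) x \<partial>?Q \<partial>P \<partial>P \<partial>?R)"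
    by (subst nn_integral_pmf_commute) rule
  also have "\<dots> = (\<integral>\<^sup>+xs. \<integral>\<^sup>+w. \<integral>\<^sup>+x. \<integral>\<^sup>+ys. F (xs @ w # ys) x \<partial>?Q \<partial>P \<partial>P \<partial>?R)"
    by (subst nn_integral_pmf_commute) rule
  also have "\<dots> = (\<integral>\<^sup>+xs. \<integral>\<^sup>+w. \<integral>\<^sup>+ys. \<integral>\<^sup>+x. F (xs @ w # ys) x \<partial>P \<partial>?Q \<partial>P \<partial>?R)"
    by (subst (2) nn_integral_pmf_commute) rule
  also have "\<dots> = (\<integral>\<^sup>+S. \<integral>\<^sup>+w. F S w \<partial>measure_pmf P \<partial>measure_pmf (replicate_pmf n P))"
    by (subst replicate_pmf_split_nth[OF assms]) simp
  finally show ?thesis .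
qed

lemma emeasure_le_nn_integral:
  assumes "\<And>x. x \<in> space M \<Longrightarrow> x \<in> B \<Longrightarrow> 1 \<le> g x"
  shows "emeasure M B \<le> (\<integral>\<^sup>+x. g x \<partial>M)"
proof (cases "B \<in> sets M")
  case True
  then have "emeasure M B = (\<integral>\<^sup>+x. indicator B x \<partial>M)" by simp
  also have "\<dots> \<le> (\<integral>\<^sup>+x. g x \<partial>M)"
    using assms by (intro nn_integral_mono) (auto simp: indicator_def)
  finally show ?thesis .
qed (simp add: emeasure_notin_sets)

lemma emeasure_upper_deviation_le_Chernoff:
  fixes V :: "'b \<Rightarrow> 'a \<Rightarrow> real" and S :: "'a list"
  assumes S: "S \<noteq> []" and l: "0 \<le> l" and V_01: "\<And>\<phi> x. 0 \<le> V \<phi> x \<and> V \<phi> x \<le> 1"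
  shows "emeasure M {\<phi> \<in> space M. emp_avg S (V \<phi>) - pop_avg P (V \<phi>) > \<tau>}
      \<le> (\<integral>\<^sup>+\<phi>. ennreal (exp (- (l * real (length S) * (\<tau> + pop_avg P (V \<phi>))))
                      * (\<Prod>i<length S. 1 + (exp l - 1) * V \<phi> (S!i))) \<partial>M)"
proof (intro emeasure_le_nn_integral)
  fix \<phi> assume "\<phi> \<in> {\<phi> \<in> space M. emp_avg S (V \<phi>) - pop_avg P (V \<phi>) > \<tau>}"
  then have "0 \<le> l * real (length S) * (emp_avg S (V \<phi>) - pop_avg P (V \<phi>) - \<tau>)" using l by simp
  then have "1 \<le> exp (l * real (length S) * (emp_avg S (V \<phi>) - pop_avg P (V \<phi>) - \<tau>))" by simp
  also have "\<dots> = exp (- (l * real (length S) * (\<tau> + pop_avg P (V \<phi>))))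
      * exp (l * (\<Sum>i<length S. V \<phi> (S!i)))"
    using S unfolding emp_avg_def by (simp add: algebra_simps flip: exp_add)
  also have "\<dots> \<le> exp (- (l * real (length S) * (\<tau> + pop_avg P (V \<phi>))))
      * (\<Prod>i<length S. 1 + (exp l - 1) * V \<phi> (S!i))"
    using l V_01 by (intro mult_left_mono exp_mult_sum_le_prod_affine) auto
  finally show "1 \<le> ennreal (exp (- (l * real (length S) * (\<tau> + pop_avg P (V \<phi>))))
      * (\<Prod>i<length S. 1 + (exp l - 1) * V \<phi> (S!i)))" by simp
qed

lemma expectation_measure_le_1:
  assumes "\<And>S. S \<in> set_pmf R \<Longrightarrow> prob_space (A S)"
  shows "measure_pmf.expectation R (\<lambda>S. measure (A S) (B S)) \<le> 1"
proof (rule measure_pmf.integral_le_const)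
  show "AE S in measure_pmf R. measure (A S) (B S) \<le> 1"
    using assms by (intro AE_pmfI) (simp add: prob_space.prob_le_1)
  then show "integrable (measure_pmf R) (\<lambda>S. measure (A S) (B S))"
    by (intro measure_pmf.integrable_const_bound[where B=1]) auto
qed

section \<open>Differentially private mechanisms\<close>

lemma adjacent_list_update:
  assumes "j < length S" "S[j:=w] \<noteq> S"
  shows "adjacent S (S[j:=w])"
proof -
  have "{i. i < length S \<and> S ! i \<noteq> S[j:=w] ! i} = {j}"
    using assms by (auto simp: nth_list_update)
  then show ?thesis unfolding adjacent_def by simp
qed

lemma diff_private_mono:
  assumes "diff_private \<epsilon> \<delta> n A" "\<epsilon> \<le> \<epsilon>'"
  shows "diff_private \<epsilon>' \<delta> n A"
  unfolding diff_private_def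
proof (intro allI impI ballI)
  fix S T E assume "length S = n" "length T = n" "adjacent S T" "E \<in> sets (A S)"
  then have "measure (A S) E \<le> exp \<epsilon> * measure (A T) E + \<delta>"
    using assms(1) unfolding diff_private_def by blast
  also have "\<dots> \<le> exp \<epsilon>' * measure (A T) E + \<delta>"
    using assms(2) by (intro add_right_mono mult_right_mono) auto
  finally show "measure (A S) E \<le> exp \<epsilon>' * measure (A T) E + \<delta>" .
qed

locale dp_mechanism =
  fixes A :: "'a::countable list \<Rightarrow> ('a \<Rightarrow> real) measure" and n :: nat and \<epsilon> :: real
  assumes prob_space_A: "length S = n \<Longrightarrow> prob_space (A S)"
    and sets_A: "length S = n \<Longrightarrow> sets (A S) = sets out_space"
    and diff_private: "diff_private \<epsilon> 0 n A"
    and eps_nonneg: "0 \<le> \<epsilon>"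
begin

lemma measurable_A:
  "length S = n \<Longrightarrow> f \<in> measurable out_space N \<Longrightarrow> f \<in> measurable (A S) N"
  using measurable_cong_sets[OF sets_A refl] by blast

lemma nn_integral_le_adjacent:
  assumes S: "length S = n" and T: "length T = n" and ST: "S = T \<or> adjacent S T"
    and f: "f \<in> borel_measurable out_space"
  shows "(\<integral>\<^sup>+\<phi>. f \<phi> \<partial>A S) \<le> ennreal (exp \<epsilon>) * (\<integral>\<^sup>+\<phi>. f \<phi> \<partial>A T)"
proof (cases "S = T")
  case True
  have "1 \<le> ennreal (exp \<epsilon>)" using eps_nonneg by simp
  from mult_right_mono[OF this, of "\<integral>\<^sup>+\<phi>. f \<phi> \<partial>A T"] show ?thesis using True by simp
next
  case False
  with ST have adj: "adjacent S T" by simp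
  interpret S: prob_space "A S" using prob_space_A[OF S] .
  interpret T: prob_space "A T" using prob_space_A[OF T] .
  have "emeasure (A S) E \<le> emeasure (scale_measure (ennreal (exp \<epsilon>)) (A T)) E" for E
  proof (cases "E \<in> sets (A S)")
    case True
    then have "measure (A S) E \<le> exp \<epsilon> * measure (A T) E"
      using diff_private S T adj unfolding diff_private_def by fastforce
    then show ?thesis
      by (simp add: S.emeasure_eq_measure T.emeasure_eq_measure ennreal_mult'[symmetric] ennreal_leI)
  qed (simp add: emeasure_notin_sets)
  then have "A S \<le> scale_measure (ennreal (exp \<epsilon>)) (A T)"
    using sets_A[OF S] sets_A[OF T]
      sets_eq_imp_space_eq[OF sets_A[OF S]] sets_eq_imp_space_eq[OF sets_A[OF T]]
    by (auto simp: le_measure_iff le_fun_def space_scale_measure)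
  then have "(\<integral>\<^sup>+\<phi>. f \<phi> \<partial>A S) \<le> (\<integral>\<^sup>+\<phi>. f \<phi> \<partial>scale_measure (ennreal (exp \<epsilon>)) (A T))"
    by (intro nn_integral_mono_measure) (simp add: sets_A[OF S] sets_A[OF T])
  also have "\<dots> = ennreal (exp \<epsilon>) * (\<integral>\<^sup>+\<phi>. f \<phi> \<partial>A T)"
    using f by (intro nn_integral_scale_measure measurable_A[OF T])
  finally show ?thesis .
qed

definition joint_nn_integral :: "'a pmf \<Rightarrow> ('a list \<Rightarrow> ('a \<Rightarrow> real) \<Rightarrow> real) \<Rightarrow> ennreal" where
  "joint_nn_integral P f = (\<integral>\<^sup>+S. \<integral>\<^sup>+\<phi>. ennreal (f S \<phi>) \<partial>A S \<partial>measure_pmf (replicate_pmf n P))"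

lemma joint_nn_integral_mono:
  assumes "\<And>S \<phi>. length S = n \<Longrightarrow> f S \<phi> \<le> g S \<phi>"
  shows "joint_nn_integral P f \<le> joint_nn_integral P g"
  unfolding joint_nn_integral_def
  by (intro nn_integral_mono_AE AE_pmfI nn_integral_mono ennreal_leI assms)
    (simp add: set_replicate_pmf)

lemma joint_nn_integral_add_cmult:
  assumes f: "\<And>S. f S \<in> borel_measurable out_space" "\<And>S \<phi>. 0 \<le> f S \<phi>"
    and g: "\<And>S. g S \<in> borel_measurable out_space" "\<And>S \<phi>. 0 \<le> g S \<phi>"
    and c: "0 \<le> c"
  shows "joint_nn_integral P (\<lambda>S \<phi>. f S \<phi> + c * g S \<phi>)
       = joint_nn_integral P f + ennreal c * joint_nn_integral P g"
proof -
  have "(\<integral>\<^sup>+\<phi>. ennreal (f S \<phi> + c * g S \<phi>) \<partial>A S)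
      = (\<integral>\<^sup>+\<phi>. ennreal (f S \<phi>) \<partial>A S) + ennreal c * (\<integral>\<^sup>+\<phi>. ennreal (g S \<phi>) \<partial>A S)"
    if S: "length S = n" for S
  proof -
    note [measurable] = measurable_A[OF S f(1)] measurable_A[OF S g(1)]
    have "(\<integral>\<^sup>+\<phi>. ennreal (f S \<phi> + c * g S \<phi>) \<partial>A S)
        = (\<integral>\<^sup>+\<phi>. ennreal (f S \<phi>) + ennreal c * ennreal (g S \<phi>) \<partial>A S)"
      using f(2) g(2) c by (intro nn_integral_cong) (simp add: ennreal_plus ennreal_mult)
    also have "\<dots> = (\<integral>\<^sup>+\<phi>. ennreal (f S \<phi>) \<partial>A S) + ennreal c * (\<integral>\<^sup>+\<phi>. ennreal (g S \<phi>) \<partial>A S)"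
      by (simp add: nn_integral_add nn_integral_cmult)
    finally show ?thesis .
  qed
  then have "joint_nn_integral P (\<lambda>S \<phi>. f S \<phi> + c * g S \<phi>)
      = (\<integral>\<^sup>+S. (\<integral>\<^sup>+\<phi>. ennreal (f S \<phi>) \<partial>A S) + ennreal c * (\<integral>\<^sup>+\<phi>. ennreal (g S \<phi>) \<partial>A S)
          \<partial>measure_pmf (replicate_pmf n P))"
    unfolding joint_nn_integral_def by (intro nn_integral_cong_AE AE_pmfI) (simp add: set_replicate_pmf)
  then show ?thesis unfolding joint_nn_integral_def by (simp add: nn_integral_add nn_integral_cmult)
qed

lemma joint_nn_integral_resample_le:
  fixes V :: "('a \<Rightarrow> real) \<Rightarrow> 'a \<Rightarrow> real"
  assumes V: "\<And>x. (\<lambda>\<phi>. V \<phi> x) \<in> borel_measurable out_space" "\<And>\<phi> x. 0 \<le> V \<phi> x \<and> V \<phi> x \<le> 1"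
    and h: "\<And>S. h S \<in> borel_measurable out_space" "\<And>S \<phi>. 0 \<le> h S \<phi>"
    and h_update: "\<And>S w. h (S[m:=w]) = h S"
    and m: "m < n"
  shows "joint_nn_integral P (\<lambda>S \<phi>. h S \<phi> * V \<phi> (S!m))
       \<le> ennreal (exp \<epsilon>) * joint_nn_integral P (\<lambda>S \<phi>. h S \<phi> * pop_avg P (V \<phi>))"
proof -
  note [measurable] = V(1) h(1)
  let ?R = "measure_pmf (replicate_pmf n P)"
  define F where "F T x = (\<integral>\<^sup>+\<phi>. ennreal (h T \<phi> * V \<phi> x) \<partial>A T)" for T x
  have "joint_nn_integral P (\<lambda>S \<phi>. h S \<phi> * V \<phi> (S!m)) = (\<integral>\<^sup>+S. \<integral>\<^sup>+w. F S (S!m) \<partial>P \<partial>?R)"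
    unfolding joint_nn_integral_def F_def by (simp add: measure_pmf.emeasure_space_1)
  also have "\<dots> \<le> (\<integral>\<^sup>+S. \<integral>\<^sup>+w. ennreal (exp \<epsilon>) * F (S[m:=w]) (S!m) \<partial>P \<partial>?R)"
  proof (intro nn_integral_mono_AE AE_pmfI nn_integral_mono)
    fix S w assume "S \<in> set_pmf (replicate_pmf n P)"
    then have S: "length S = n" by (simp add: set_replicate_pmf)
    then have "S = S[m:=w] \<or> adjacent S (S[m:=w])"
      using adjacent_list_update[of m S w] m by fastforce
    with S show "F S (S!m) \<le> ennreal (exp \<epsilon>) * F (S[m:=w]) (S!m)"
      unfolding F_def h_update by (intro nn_integral_le_adjacent) auto
  qed
  also have "\<dots> = ennreal (exp \<epsilon>) * (\<integral>\<^sup>+S. \<integral>\<^sup>+w. F (S[m:=w]) (S!m) \<partial>P \<partial>?R)"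
    by (simp add: nn_integral_cmult)
  also have "(\<integral>\<^sup>+S. \<integral>\<^sup>+w. F (S[m:=w]) (S!m) \<partial>P \<partial>?R) = (\<integral>\<^sup>+S. \<integral>\<^sup>+w. F S w \<partial>P \<partial>?R)"
    by (rule nn_integral_replicate_pmf_resample[OF m])
  also have "\<dots> = joint_nn_integral P (\<lambda>S \<phi>. h S \<phi> * pop_avg P (V \<phi>))"
    unfolding joint_nn_integral_def
  proof (intro nn_integral_cong_AE AE_pmfI)
    fix S assume "S \<in> set_pmf (replicate_pmf n P)"
    then have S: "length S = n" by (simp add: set_replicate_pmf)
    have "(\<integral>\<^sup>+w. F S w \<partial>P) = (\<integral>\<^sup>+\<phi>. \<integral>\<^sup>+w. ennreal (h S \<phi>) * ennreal (V \<phi> w) \<partial>P \<partial>A S)"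
      unfolding F_def using h(2) V(2)
      by (subst nn_integral_pmf_swap_measure) (auto intro!: measurable_A[OF S] simp: ennreal_mult)
    also have "\<dots> = (\<integral>\<^sup>+\<phi>. ennreal (h S \<phi> * pop_avg P (V \<phi>)) \<partial>A S)"
      using h(2) V(2) pop_avg_nonneg[of "V _" P]
      by (simp add: nn_integral_cmult nn_integral_eq_pop_avg ennreal_mult)
    finally show "(\<integral>\<^sup>+w. F S w \<partial>P) = (\<integral>\<^sup>+\<phi>. ennreal (h S \<phi> * pop_avg P (V \<phi>)) \<partial>A S)" .
  qed
  finally show ?thesis by simp
qed

lemma joint_nn_integral_resample_factor_le:
  fixes V :: "('a \<Rightarrow> real) \<Rightarrow> 'a \<Rightarrow> real"
  assumes V: "\<And>x. (\<lambda>\<phi>. V \<phi> x) \<in> borel_measurable out_space" "\<And>\<phi> x. 0 \<le> V \<phi> x \<and> V \<phi> x \<le> 1"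
    and h: "\<And>S. h S \<in> borel_measurable out_space" "\<And>S \<phi>. 0 \<le> h S \<phi>"
    and h_update: "\<And>S w. h (S[m:=w]) = h S"
    and m: "m < n" and c: "0 \<le> c"
  shows "joint_nn_integral P (\<lambda>S \<phi>. h S \<phi> * (1 + c * V \<phi> (S!m)))
       \<le> joint_nn_integral P (\<lambda>S \<phi>. h S \<phi> * (1 + c * exp \<epsilon> * pop_avg P (V \<phi>)))"
proof -
  have p: "(\<lambda>\<phi>. pop_avg P (V \<phi>)) \<in> borel_measurable out_space" "0 \<le> pop_avg P (V \<phi>)" for \<phi>
    using V by (auto intro: borel_measurable_pop_avg pop_avg_nonneg)
  note [measurable] = V(1) h(1) p(1)
  have "joint_nn_integral P (\<lambda>S \<phi>. h S \<phi> * (1 + c * V \<phi> (S!m)))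
      = joint_nn_integral P (\<lambda>S \<phi>. h S \<phi> + c * (h S \<phi> * V \<phi> (S!m)))"
    by (simp add: algebra_simps)
  also have "\<dots> = joint_nn_integral P h + ennreal c * joint_nn_integral P (\<lambda>S \<phi>. h S \<phi> * V \<phi> (S!m))"
    using h(2) V(2) c by (intro joint_nn_integral_add_cmult) auto
  also have "\<dots> \<le> joint_nn_integral P h
      + ennreal c * (ennreal (exp \<epsilon>) * joint_nn_integral P (\<lambda>S \<phi>. h S \<phi> * pop_avg P (V \<phi>)))"
    using joint_nn_integral_resample_le[OF V h h_update m]
    by (intro add_left_mono mult_left_mono) auto
  also have "\<dots> = joint_nn_integral P (\<lambda>S \<phi>. h S \<phi> + c * exp \<epsilon> * (h S \<phi> * pop_avg P (V \<phi>)))"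
    using h(2) p(2) c by (subst joint_nn_integral_add_cmult) (auto simp: ennreal_mult mult_ac)
  also have "\<dots> = joint_nn_integral P (\<lambda>S \<phi>. h S \<phi> * (1 + c * exp \<epsilon> * pop_avg P (V \<phi>)))"
    by (simp add: algebra_simps)
  finally show ?thesis .
qed

lemma joint_nn_integral_prod_le:
  fixes V :: "('a \<Rightarrow> real) \<Rightarrow> 'a \<Rightarrow> real"
  assumes V: "\<And>x. (\<lambda>\<phi>. V \<phi> x) \<in> borel_measurable out_space" "\<And>\<phi> x. 0 \<le> V \<phi> x \<and> V \<phi> x \<le> 1"
    and K: "K \<in> borel_measurable out_space" "\<And>\<phi>. 0 \<le> K \<phi>"
    and c: "0 \<le> c"
  shows "joint_nn_integral P (\<lambda>S \<phi>. K \<phi> * (\<Prod>i<n. 1 + c * V \<phi> (S!i)))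
       \<le> joint_nn_integral P (\<lambda>S \<phi>. K \<phi> * (1 + c * exp \<epsilon> * pop_avg P (V \<phi>)) ^ n)"
proof -
  define p where "p \<phi> = pop_avg P (V \<phi>)" for \<phi>
  have p_nonneg: "0 \<le> p \<phi>" for \<phi>
    unfolding p_def by (rule pop_avg_nonneg, rule V(2))
  have [measurable]: "p \<in> borel_measurable out_space"
    unfolding p_def by (rule borel_measurable_pop_avg[OF V])
  note [measurable] = V(1) K(1)
  define hybrid where
    "hybrid m S \<phi> = K \<phi> * (1 + c * exp \<epsilon> * p \<phi>) ^ m * (\<Prod>i\<in>{m..<n}. 1 + c * V \<phi> (S!i))" for m S \<phi>
  have "joint_nn_integral P (hybrid 0) \<le> joint_nn_integral P (hybrid m)" if "m \<le> n" for m
    using that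
  proof (induction m)
    case (Suc m)
    define h where
      "h S \<phi> = K \<phi> * (1 + c * exp \<epsilon> * p \<phi>) ^ m * (\<Prod>i\<in>{Suc m..<n}. 1 + c * V \<phi> (S!i))" for S \<phi>
    have h_measurable: "h S \<in> borel_measurable out_space" for S
      unfolding h_def by measurable
    have h_nonneg: "0 \<le> h S \<phi>" for S \<phi>
      unfolding h_def using K(2) c V(2) p_nonneg by (intro mult_nonneg_nonneg prod_nonneg) auto
    have h_update: "h (S[m:=w]) = h S" for S w
      unfolding h_def by (intro ext) (auto intro!: prod.cong simp: nth_list_update)
    have "{m..<n} = insert m {Suc m..<n}" using Suc.prems by auto
    then have "hybrid m = (\<lambda>S \<phi>. h S \<phi> * (1 + c * V \<phi> (S!m)))"
      unfolding hybrid_def h_def by (intro ext) (simp add: algebra_simps)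
    moreover have "hybrid (Suc m) = (\<lambda>S \<phi>. h S \<phi> * (1 + c * exp \<epsilon> * p \<phi>))"
      unfolding hybrid_def h_def by (intro ext) (simp add: algebra_simps)
    ultimately have "joint_nn_integral P (hybrid m) \<le> joint_nn_integral P (hybrid (Suc m))"
      using joint_nn_integral_resample_factor_le[OF V h_measurable h_nonneg h_update _ c, where P=P]
        Suc.prems
      by (simp add: p_def)
    with Suc show ?case by (meson Suc_leD order.trans)
  qed simp
  from this[of n] show ?thesis unfolding hybrid_def p_def by (simp add: atLeast0LessThan)
qed

lemma joint_nn_integral_const:
  "0 \<le> c \<Longrightarrow> joint_nn_integral P (\<lambda>_ _. c) = ennreal c"
  unfolding joint_nn_integral_def
  by (subst nn_integral_cong_AE[where v="\<lambda>_. ennreal c"])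
    (auto intro!: AE_pmfI simp: set_replicate_pmf prob_space.emeasure_space_1[OF prob_space_A]
      measure_pmf.emeasure_space_1)

lemma upper_deviation_le:
  fixes V :: "('a \<Rightarrow> real) \<Rightarrow> 'a \<Rightarrow> real"
  assumes V: "\<And>x. (\<lambda>\<phi>. V \<phi> x) \<in> borel_measurable out_space" "\<And>\<phi> x. 0 \<le> V \<phi> x \<and> V \<phi> x \<le> 1"
    and \<tau>: "0 < \<tau>" "\<tau> \<le> 1" and \<epsilon>: "\<epsilon> \<le> \<tau>/2" and n: "0 < n"
  shows "(\<integral>\<^sup>+S. emeasure (A S) {\<phi> \<in> space (A S). emp_avg S (V \<phi>) - pop_avg P (V \<phi>) > \<tau>}
            \<partial>measure_pmf (replicate_pmf n P))
         \<le> ennreal (exp (- (real n * \<tau>^2 / 12)))"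
proof -
  define l where "l = 2 * \<tau>"
  define c where "c = exp l - 1"
  define p where "p \<phi> = pop_avg P (V \<phi>)" for \<phi>
  define K where "K \<phi> = exp (- (l * real n * (\<tau> + p \<phi>)))" for \<phi>
  have l: "0 \<le> l" and c: "0 \<le> c" using \<tau> by (simp_all add: l_def c_def)
  have p_01: "0 \<le> p \<phi>" "p \<phi> \<le> 1" for \<phi>
    unfolding p_def by (rule pop_avg_nonneg pop_avg_le_1, rule V(2))+
  have [measurable]: "p \<in> borel_measurable out_space"
    unfolding p_def by (rule borel_measurable_pop_avg[OF V])
  have K: "K \<in> borel_measurable out_space" "0 \<le> K \<phi>" for \<phi>
    unfolding K_def by simp_all
  have "(\<integral>\<^sup>+S. emeasure (A S) {\<phi> \<in> space (A S). emp_avg S (V \<phi>) - pop_avg P (V \<phi>) > \<tau>}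
            \<partial>measure_pmf (replicate_pmf n P))
      \<le> joint_nn_integral P (\<lambda>S \<phi>. K \<phi> * (\<Prod>i<n. 1 + c * V \<phi> (S!i)))"
    unfolding joint_nn_integral_def K_def c_def p_def using n l V(2)
    by (intro nn_integral_mono_AE AE_pmfI emeasure_upper_deviation_le_Chernoff[THEN order_trans])
      (auto simp: set_replicate_pmf)
  also have "\<dots> \<le> joint_nn_integral P (\<lambda>S \<phi>. K \<phi> * (1 + c * exp \<epsilon> * p \<phi>) ^ n)"
    unfolding p_def by (rule joint_nn_integral_prod_le[OF V K c])
  also have "\<dots> \<le> joint_nn_integral P (\<lambda>_ _. exp (- (l * real n * \<tau>)) * exp (23/12 * \<tau>^2) ^ n)"
  proof (intro joint_nn_integral_mono)
    fix \<phi>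
    have "exp (- (l * p \<phi>)) * (1 + c * exp \<epsilon> * p \<phi>) \<le> exp (23/12 * \<tau>^2)"
      using exp_neg_mult_affine_le[of \<tau> "p \<phi>" \<epsilon>] \<tau> p_01 eps_nonneg \<epsilon>
      unfolding l_def c_def by (simp add: mult.assoc)
    then have "(exp (- (l * p \<phi>)) * (1 + c * exp \<epsilon> * p \<phi>)) ^ n \<le> exp (23/12 * \<tau>^2) ^ n"
      using c p_01 by (intro power_mono) auto
    moreover have "K \<phi> = exp (- (l * real n * \<tau>)) * exp (- (l * p \<phi>)) ^ n"
      unfolding K_def by (simp add: algebra_simps flip: exp_of_nat_mult exp_add)
    ultimately show "K \<phi> * (1 + c * exp \<epsilon> * p \<phi>) ^ n \<le> exp (- (l * real n * \<tau>)) * exp (23/12 * \<tau>^2) ^ n"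
      by (simp add: power_mult_distrib mult.assoc)
  qed
  also have "\<dots> = ennreal (exp (- (real n * \<tau>^2 / 12)))"
    unfolding l_def
    by (simp add: joint_nn_integral_const algebra_simps power2_eq_square flip: exp_of_nat_mult exp_add)
  finally show ?thesis .
qed

lemma sets_upper_deviation:
  fixes V :: "('a \<Rightarrow> real) \<Rightarrow> 'a \<Rightarrow> real"
  assumes V: "\<And>x. (\<lambda>\<phi>. V \<phi> x) \<in> borel_measurable out_space" "\<And>\<phi> x. 0 \<le> V \<phi> x \<and> V \<phi> x \<le> 1"
    and S: "length S = n"
  shows "{\<phi> \<in> space (A S). emp_avg S (V \<phi>) - pop_avg P (V \<phi>) > \<tau>} \<in> sets (A S)"
proof -
  have [measurable]: "(\<lambda>\<phi>. pop_avg P (V \<phi>)) \<in> borel_measurable (A S)"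
    by (intro measurable_A[OF S] borel_measurable_pop_avg V)
  have [measurable]: "(\<lambda>\<phi>. emp_avg S (V \<phi>)) \<in> borel_measurable (A S)"
    unfolding emp_avg_def
    by (intro measurable_A[OF S] borel_measurable_divide borel_measurable_sum V(1) borel_measurable_const)
  show ?thesis by measurable
qed

lemma emeasure_deviation_le_upper_deviations:
  assumes S: "length S = n" and n: "0 < n" and bounded: "AE \<phi> in A S. \<forall>x. 0 \<le> \<phi> x \<and> \<phi> x \<le> 1"
  shows "emeasure (A S) {\<phi> \<in> space (A S). \<bar>pop_avg P \<phi> - emp_avg S \<phi>\<bar> > \<tau>}
    \<le> emeasure (A S) {\<phi> \<in> space (A S).
           emp_avg S (\<lambda>x. clip01 (\<phi> x)) - pop_avg P (\<lambda>x. clip01 (\<phi> x)) > \<tau>}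
      + emeasure (A S) {\<phi> \<in> space (A S).
           emp_avg S (\<lambda>x. 1 - clip01 (\<phi> x)) - pop_avg P (\<lambda>x. 1 - clip01 (\<phi> x)) > \<tau>}"
    (is "_ \<le> emeasure _ ?U1 + emeasure _ ?U2")
proof -
  have sets: "?U1 \<in> sets (A S)" "?U2 \<in> sets (A S)"
    using clip01_bounds by (auto intro!: sets_upper_deviation[OF _ _ S])
  have "emeasure (A S) {\<phi> \<in> space (A S). \<bar>pop_avg P \<phi> - emp_avg S \<phi>\<bar> > \<tau>} \<le> emeasure (A S) (?U1 \<union> ?U2)"
  proof (rule emeasure_mono_AE)
    show "AE \<phi> in A S. \<phi> \<in> {\<phi> \<in> space (A S). \<bar>pop_avg P \<phi> - emp_avg S \<phi>\<bar> > \<tau>} \<longrightarrow> \<phi> \<in> ?U1 \<union> ?U2"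
      using bounded
    proof eventually_elim
      case (elim \<phi>)
      then have "(\<lambda>x. clip01 (\<phi> x)) = \<phi>" "(\<lambda>x. 1 - clip01 (\<phi> x)) = (\<lambda>x. 1 - \<phi> x)"
        by (simp_all add: clip01_id)
      moreover have "S \<noteq> []" using S n by auto
      ultimately show ?case using elim by (auto simp: emp_avg_one_minus pop_avg_one_minus)
    qed
  qed (use sets in blast)
  also have "\<dots> \<le> emeasure (A S) ?U1 + emeasure (A S) ?U2"
    using sets by (rule emeasure_subadditive)
  finally show ?thesis .
qed

lemma deviation_nn_integral_le:
  assumes bounded: "\<And>S. length S = n \<Longrightarrow> AE \<phi> in A S. \<forall>x. 0 \<le> \<phi> x \<and> \<phi> x \<le> 1"
    and \<tau>: "0 < \<tau>" "\<tau> \<le> 1" and \<epsilon>: "\<epsilon> \<le> \<tau>/2" and n: "0 < n"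
  shows "(\<integral>\<^sup>+S. emeasure (A S) {\<phi> \<in> space (A S). \<bar>pop_avg P \<phi> - emp_avg S \<phi>\<bar> > \<tau>}
            \<partial>measure_pmf (replicate_pmf n P))
         \<le> 2 * ennreal (exp (- (real n * \<tau>^2 / 12)))"
proof -
  let ?R = "measure_pmf (replicate_pmf n P)"
  let ?U1 = "\<lambda>S. {\<phi> \<in> space (A S). emp_avg S (\<lambda>x. clip01 (\<phi> x)) - pop_avg P (\<lambda>x. clip01 (\<phi> x)) > \<tau>}"
  let ?U2 = "\<lambda>S. {\<phi> \<in> space (A S).
    emp_avg S (\<lambda>x. 1 - clip01 (\<phi> x)) - pop_avg P (\<lambda>x. 1 - clip01 (\<phi> x)) > \<tau>}"
  have "(\<integral>\<^sup>+S. emeasure (A S) {\<phi> \<in> space (A S). \<bar>pop_avg P \<phi> - emp_avg S \<phi>\<bar> > \<tau>} \<partial>?R)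
      \<le> (\<integral>\<^sup>+S. emeasure (A S) (?U1 S) + emeasure (A S) (?U2 S) \<partial>?R)"
    using bounded n
    by (intro nn_integral_mono_AE AE_pmfI emeasure_deviation_le_upper_deviations)
      (auto simp: set_replicate_pmf)
  also have "\<dots> = (\<integral>\<^sup>+S. emeasure (A S) (?U1 S) \<partial>?R) + (\<integral>\<^sup>+S. emeasure (A S) (?U2 S) \<partial>?R)"
    by (simp add: nn_integral_add)
  also have "\<dots> \<le> ennreal (exp (- (real n * \<tau>^2 / 12))) + ennreal (exp (- (real n * \<tau>^2 / 12)))"
    using \<tau> \<epsilon> n clip01_bounds by (intro add_mono upper_deviation_le) auto
  finally show ?thesis by (simp add: mult_2)
qed

lemma expectation_deviation_le:
  assumes bounded: "\<And>S. length S = n \<Longrightarrow> AE \<phi> in A S. \<forall>x. 0 \<le> \<phi> x \<and> \<phi> x \<le> 1"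
    and \<tau>: "0 < \<tau>" and \<epsilon>: "\<epsilon> \<le> \<tau>/2" and n: "0 < n"
  shows "measure_pmf.expectation (replicate_pmf n P)
           (\<lambda>S. measure (A S) {\<phi> \<in> space (A S). \<bar>pop_avg P \<phi> - emp_avg S \<phi>\<bar> > \<tau>})
         \<le> 2 * exp (- (real n * \<tau>^2 / 12))"
proof -
  let ?dev = "\<lambda>S. {\<phi> \<in> space (A S). \<bar>pop_avg P \<phi> - emp_avg S \<phi>\<bar> > \<tau>}"
  have "(\<integral>\<^sup>+S. ennreal (measure (A S) (?dev S)) \<partial>measure_pmf (replicate_pmf n P))
      \<le> ennreal (2 * exp (- (real n * \<tau>^2 / 12)))"
  proof (cases "\<tau> \<le> 1")
    case True
    have "(\<integral>\<^sup>+S. ennreal (measure (A S) (?dev S)) \<partial>measure_pmf (replicate_pmf n P))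
        = (\<integral>\<^sup>+S. emeasure (A S) (?dev S) \<partial>measure_pmf (replicate_pmf n P))"
      by (intro nn_integral_cong_AE AE_pmfI)
        (simp add: set_replicate_pmf
          finite_measure.emeasure_eq_measure[OF prob_space.finite_measure[OF prob_space_A]])
    also have "\<dots> \<le> 2 * ennreal (exp (- (real n * \<tau>^2 / 12)))"
      using deviation_nn_integral_le[OF bounded \<tau> True \<epsilon> n] .
    finally show ?thesis by (simp add: ennreal_mult)
  next
    case False
    have "measure (A S) (?dev S) = 0" if S: "length S = n" for S
    proof -
      have "S \<noteq> []" using S n by auto
      have "AE \<phi> in A S. \<not> \<bar>pop_avg P \<phi> - emp_avg S \<phi>\<bar> > \<tau>"
        using bounded[OF S]
      proof eventually_elim
        case (elim \<phi>)
        with \<open>S \<noteq> []\<close> False show ?case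
          using abs_pop_avg_minus_emp_avg_le_1[of S \<phi> P] by auto
      qed
      then show ?thesis by (simp add: measure_def emeasure_eq_0_AE)
    qed
    then show ?thesis
      by (subst nn_integral_cong_AE[where v="\<lambda>_. 0"]) (auto intro!: AE_pmfI simp: set_replicate_pmf)
  qed
  then show ?thesis
    by (subst integral_eq_nn_integral) (auto intro: enn2real_leI)
qed

end

theorem theorem3p2:
  fixes A :: "'a::countable list \<Rightarrow> ('a \<Rightarrow> real) measure"
    and P :: "'a pmf" and n :: nat and \<epsilon> \<beta> \<tau> :: real
  assumes valid: "\<And>S. length S = n \<Longrightarrow>
                    prob_space (A S) \<and> sets (A S) = sets out_space \<and>
                    (AE \<phi> in A S. \<forall>x. 0 \<le> \<phi> x \<and> \<phi> x \<le> 1)"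
    and dp: "diff_private \<epsilon> 0 n A"
    and \<beta>: "\<beta> > 0" and \<tau>: "\<tau> > 0"
    and n: "real n \<ge> 12 * ln (4 / \<beta>) / \<tau>\<^sup>2"
    and \<epsilon>: "\<epsilon> \<le> \<tau> / 2"
  shows "measure_pmf.expectation (replicate_pmf n P)
           (\<lambda>S. measure (A S) {\<phi> \<in> space (A S). \<bar>pop_avg P \<phi> - emp_avg S \<phi>\<bar> > \<tau>}) \<le> \<beta>"
proof (cases "\<beta> < 1")
  case True
  interpret dp_mechanism A n "max \<epsilon> 0"
    using valid diff_private_mono[OF dp max.cobounded1[of \<epsilon> 0]]
    by (intro dp_mechanism.intro) (blast, blast, blast, simp)
  have "0 < 12 * ln (4 / \<beta>) / \<tau>^2" using \<beta> \<tau> True by simp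
  with n have "0 < n" by linarith
  with valid \<tau> \<epsilon> have "measure_pmf.expectation (replicate_pmf n P)
      (\<lambda>S. measure (A S) {\<phi> \<in> space (A S). \<bar>pop_avg P \<phi> - emp_avg S \<phi>\<bar> > \<tau>})
      \<le> 2 * exp (- (real n * \<tau>^2 / 12))"
    by (intro expectation_deviation_le) auto
  with exp_le_of_sample_size[OF \<beta> \<tau> n] \<beta> show ?thesis by linarith
next
  case False
  with valid show ?thesis
    by (intro order.trans[OF expectation_measure_le_1]) (auto simp: set_replicate_pmf)
qed

end
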